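(* Let $d\ge2$, $\alpha\in(0,\infty)^d$, $N\in\mathbb Z_+$. For every $0\le m\le N$ and all $r,s\in N\Delta_{(d-1)}$, $$\xi^{H,\alpha}_m(r,s)=\sum_{l=0}^{m}b_{ml}\,\chi^{H,\alpha}_l(r,s),\qquad b_{ml}=\sum_{n=l}^{m}\left(\frac{N_{[n]}}{(|\alpha|+N)_{(n)}}\right)^2\frac{m_{[n]}}{(|\alpha|+m)_{(n)}}\,a^{|\alpha|}_{nl}.$$
   Context: $N\Delta_{(d-1)}=\{r\in\mathbb Z_+^d:|r|=N\}$, $|v|=\sum_iv_i$. $(c)_{(k)}=\Gamma(c+k)/\Gamma(c)$, $c_{[k]}=c(c-1)\cdots(c-k+1)$. $DM_\beta(l;M)=\binom{M}{l}\prod_i(\beta_i)_{(l_i)}/(|\beta|)_{(M)}$ for $l\in\mathbb Z_+^d$ with $|l|=M$. $\xi^{H,\alpha}_m(r,s)=\sum_{|l|=m}DM_{\alpha+r}(l;m)DM_{\alpha+s}(l;m)/DM_\alpha(l;m)$. $\chi^{H,\alpha}_m(r,s)=\sum_{|l|=m}\frac{1}{DM_\alpha(l;m)}\frac{\binom{m}{l}p_l(r)}{N_{[m]}}\frac{\binom{m}{l}p_l(s)}{N_{[m]}}$ with $p_l(r)=\prod_i(r_i)_{[l_i]}$. $a^{\theta}_{nm}=(\theta+2n-1)(-1)^{n-m}\frac{(\theta+m)_{(n-1)}}{m!(n-m)!}$ for $0\le m\le n$ (with $a^\theta_{00}=1$). *)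

theory Defs
  imports Complex_Main
begin

text \<open>Vectors in Z_+^d / (0,inf)^d are represented as functions on nat,
  only the coordinates 0..d-1 being relevant.\<close>

definition simplex_pts :: "nat \<Rightarrow> nat \<Rightarrow> (nat \<Rightarrow> nat) set" where
  "simplex_pts d N = {r. (\<forall>i\<ge>d. r i = 0) \<and> (\<Sum>i<d. r i) = N}"

definition ffall :: "real \<Rightarrow> nat \<Rightarrow> real" where
  "ffall c k = (\<Prod>j<k. c - real j)"

definition multinom :: "nat \<Rightarrow> nat \<Rightarrow> (nat \<Rightarrow> nat) \<Rightarrow> real" where
  "multinom d M l = fact M / (\<Prod>i<d. fact (l i))"

definition DM :: "nat \<Rightarrow> (nat \<Rightarrow> real) \<Rightarrow> (nat \<Rightarrow> nat) \<Rightarrow> nat \<Rightarrow> real" where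
  "DM d \<beta> l M = multinom d M l * (\<Prod>i<d. pochhammer (\<beta> i) (l i))
                  / pochhammer (\<Sum>i<d. \<beta> i) M"

definition xiH :: "nat \<Rightarrow> (nat \<Rightarrow> real) \<Rightarrow> nat \<Rightarrow> (nat \<Rightarrow> nat) \<Rightarrow> (nat \<Rightarrow> nat) \<Rightarrow> real" where
  "xiH d \<alpha> m r s = (\<Sum>l\<in>simplex_pts d m.
      DM d (\<lambda>i. \<alpha> i + real (r i)) l m * DM d (\<lambda>i. \<alpha> i + real (s i)) l m / DM d \<alpha> l m)"

definition pl :: "nat \<Rightarrow> (nat \<Rightarrow> nat) \<Rightarrow> (nat \<Rightarrow> nat) \<Rightarrow> real" where
  "pl d l r = (\<Prod>i<d. ffall (real (r i)) (l i))"

definition chiH :: "nat \<Rightarrow> nat \<Rightarrow> (nat \<Rightarrow> real) \<Rightarrow> nat \<Rightarrow> (nat \<Rightarrow> nat) \<Rightarrow> (nat \<Rightarrow> nat) \<Rightarrow> real" where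
  "chiH d N \<alpha> m r s = (\<Sum>l\<in>simplex_pts d m.
      (1 / DM d \<alpha> l m) * (multinom d m l * pl d l r / ffall (real N) m)
                       * (multinom d m l * pl d l s / ffall (real N) m))"

definition acoef :: "real \<Rightarrow> nat \<Rightarrow> nat \<Rightarrow> real" where
  "acoef \<theta> n m = (if n = 0 then 1 else
     (\<theta> + 2 * real n - 1) * (-1) ^ (n - m) * pochhammer (\<theta> + real m) (n - 1)
       / (fact m * fact (n - m)))"

definition bcoef :: "nat \<Rightarrow> real \<Rightarrow> nat \<Rightarrow> nat \<Rightarrow> real" where
  "bcoef N \<theta> m l = (\<Sum>n=l..m. (ffall (real N) n / pochhammer (\<theta> + real N) n) ^ 2
       * (ffall (real m) n / pochhammer (\<theta> + real m) n) * acoef \<theta> n l)"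

end

theory Submission
  imports Defs "HOL-Computational_Algebra.Formal_Power_Series"
begin

(*
  Write \<theta> = |\<alpha>| and F(a,b;c)_n = (a)_(n) (b)_(n) / ((c)_(n) n!) for the coefficients of
  Gauss' hypergeometric series.  Reading a sum over the simplex m\<Delta> as the coefficient of
  z^m in a product of power series, one finds
     \<xi>_m = m! (\<theta>)_(m) / (\<theta>+N)_(m)^2 \<cdot> [z^m] \<Prod>_i F(\<alpha>_i+r_i, \<alpha>_i+s_i; \<alpha>_i; z),
     \<chi>_k = k! (\<theta>)_(k) / N_[k]^2     \<cdot> [z^k] \<Prod>_i F(-r_i, -s_i; \<alpha>_i; z).
  Euler's transformation F(a,b;c;z) = (1-z)^(c-a-b) F(c-a,c-b;c;z), applied in every
  coordinate, links the two products and yields \<xi>_m = \<Sum>_{k\<le>m} c_mk \<chi>_k with explicit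
  coefficients c_mk.  It remains to show b_ml = c_ml.  Put \<rho>_k(n) = k_[n] / (\<theta>+k)_(n), so
  that b_ml = \<Sum>_n \<rho>_N(n)^2 \<rho>_m(n) a_nl.  The triangular arrays \<rho>_k(n) and a_nl are inverse
  to each other (a telescoping sum), and a second use of Euler's transformation gives
  \<Sum>_k c_mk \<rho>_k(n) = \<rho>_N(n)^2 \<rho>_m(n); inverting yields b_ml = c_ml.
*)

unbundle fps_syntax

section \<open>Falling factorials\<close>

lemma ffall_0 [simp]: "ffall c 0 = 1"
  by (simp add: ffall_def)

lemma ffall_Suc: "ffall c (Suc k) = ffall c k * (c - real k)"
  by (simp add: ffall_def)

lemma pochhammer_neg: "pochhammer (- c) k = (-1) ^ k * ffall c k"
  by (induction k) (simp_all add: ffall_Suc pochhammer_Suc algebra_simps)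

lemma pochhammer_neg_mult_neg: "pochhammer (- x) k * pochhammer (- y) k = ffall x k * ffall y k"
proof -
  have "(-1::real) ^ k * (-1) ^ k = 1"
    by (simp flip: power_mult_distrib)
  then show ?thesis
    by (simp add: pochhammer_neg algebra_simps)
qed

lemma ffall_add: "ffall c (a + b) = ffall c a * ffall (c - real a) b"
  by (induction b) (simp_all add: ffall_Suc algebra_simps)

lemma ffall_of_nat_mult_fact: "k \<le> n \<Longrightarrow> ffall (real n) k * fact (n - k) = fact n"
proof (induction k)
  case 0
  then show ?case by simp
next
  case (Suc k)
  then have "fact (n - k) = (fact (n - Suc k) :: real) * real (n - k)"
    by (metis Suc_diff_le diff_Suc_Suc fact_Suc mult.commute)
  with Suc show ?case
    by (simp add: ffall_Suc algebra_simps)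
qed

lemma ffall_of_nat_eq_0: "n < k \<Longrightarrow> ffall (real n) k = 0"
  unfolding ffall_def by (rule prod_zero) auto

lemma ffall_of_nat_neq_0: "k \<le> n \<Longrightarrow> ffall (real n) k \<noteq> 0"
  using ffall_of_nat_mult_fact[of k n] by auto

text \<open>Positivity is how all denominators (\<theta>)_(k), (\<alpha>_i)_(k), ... are seen to be nonzero.\<close>

lemma pochhammer_pos_neq_0: "(0::real) < x \<Longrightarrow> pochhammer x n \<noteq> 0"
  using pochhammer_pos[of x n] by simp


section \<open>Hypergeometric coefficients and Euler's transformation\<close>

definition hyp_coeff :: "real \<Rightarrow> real \<Rightarrow> real \<Rightarrow> nat \<Rightarrow> real" where
  "hyp_coeff a b c n = pochhammer a n * pochhammer b n / (pochhammer c n * fact n)"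

lemma hyp_coeff_commute: "hyp_coeff a b c n = hyp_coeff b a c n"
  by (simp add: hyp_coeff_def mult.commute)

text \<open>A Chu--Vandermonde type expansion of (y - x)_(M); it is how the factor (1-z)^(c-a-b)
  enters the proof of Euler's transformation.\<close>

lemma pochhammer_diff_expansion:
  fixes x y :: real
  shows "pochhammer (y - x) M
       = (\<Sum>i\<le>M. of_nat (M choose i) * ((-1) ^ i * pochhammer x i) * pochhammer (y + of_nat i) (M - i))"
proof (induction M arbitrary: y)
  case 0
  then show ?case by simp
next
  case (Suc M)
  define s where "s i = (-1::real) ^ i * pochhammer x i" for i
  have s_Suc: "s (Suc i) = - s i * (x + of_nat i)" for i
    by (simp add: s_def pochhammer_Suc)
  have Pascal: "of_nat (Suc M choose i)
      = (of_nat (M choose i) :: real) + (if i = 0 then 0 else of_nat (M choose (i - 1)))" for i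
    by (cases i) auto
  have "(\<Sum>i\<le>Suc M. of_nat (Suc M choose i) * s i * pochhammer (y + of_nat i) (Suc M - i))
      = (\<Sum>i\<le>Suc M. of_nat (M choose i) * s i * pochhammer (y + of_nat i) (Suc M - i))
        + (\<Sum>i\<le>Suc M. (if i = 0 then 0 else of_nat (M choose (i - 1))) * s i
              * pochhammer (y + of_nat i) (Suc M - i))"
    by (simp add: Pascal sum.distrib[symmetric] algebra_simps)
  also have "(\<Sum>i\<le>Suc M. of_nat (M choose i) * s i * pochhammer (y + of_nat i) (Suc M - i))
      = (\<Sum>i\<le>M. of_nat (M choose i) * s i * ((y + of_nat i) * pochhammer (y + 1 + of_nat i) (M - i)))"
    by (simp add: Suc_diff_le pochhammer_rec algebra_simps)
  also have "(\<Sum>i\<le>Suc M. (if i = 0 then 0 else of_nat (M choose (i - 1))) * s i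
              * pochhammer (y + of_nat i) (Suc M - i))
      = (\<Sum>i\<le>M. of_nat (M choose i) * s (Suc i) * pochhammer (y + 1 + of_nat i) (M - i))"
    by (subst sum.atMost_Suc_shift) (simp add: algebra_simps)
  also have "(\<Sum>i\<le>M. of_nat (M choose i) * s i * ((y + of_nat i) * pochhammer (y + 1 + of_nat i) (M - i)))
      + (\<Sum>i\<le>M. of_nat (M choose i) * s (Suc i) * pochhammer (y + 1 + of_nat i) (M - i))
      = (y - x) * (\<Sum>i\<le>M. of_nat (M choose i) * s i * pochhammer (y + 1 + of_nat i) (M - i))"
    by (simp add: sum_distrib_left sum.distrib[symmetric] s_Suc algebra_simps)
  also have "\<dots> = (y - x) * pochhammer (y + 1 - x) M"
    using Suc.IH[of "y + 1"] by (simp add: s_def add_ac)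
  also have "\<dots> = pochhammer (y - x) (Suc M)"
    by (simp add: pochhammer_rec algebra_simps)
  finally show ?case
    by (simp add: s_def)
qed

text \<open>Pfaff's transformation F(a,b;c;z) = (1-z)^(-a) F(a,c-b;c;z/(z-1)), coefficientwise;
  it is a rewriting of the Chu--Vandermonde identity of the library.\<close>

lemma pfaff_coeff:
  assumes c: "\<And>k. pochhammer c k \<noteq> 0"
  shows "hyp_coeff a b c n
       = (\<Sum>k\<le>n. hyp_coeff a (c - b) c k * (-1) ^ k * pochhammer (a + of_nat k) (n - k) / fact (n - k))"
proof -
  have Vandermonde: "(\<Sum>k=0..n. pochhammer (c - b) k * pochhammer (- of_nat n) k / (fact k * pochhammer c k))
       = pochhammer b n / pochhammer c n"
    using Vandermonde_pochhammer[of n c "c - b"] c by (force simp: pochhammer_eq_0_iff)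
  have "(\<Sum>k\<le>n. hyp_coeff a (c - b) c k * (-1) ^ k * pochhammer (a + of_nat k) (n - k) / fact (n - k))
      = (\<Sum>k\<le>n. pochhammer a n / fact n
            * (pochhammer (c - b) k * pochhammer (- of_nat n) k / (fact k * pochhammer c k)))"
  proof (rule sum.cong[OF refl])
    fix k assume "k \<in> {..n}"
    then have kn: "k \<le> n" by simp
    have split_a: "pochhammer a n = pochhammer a k * pochhammer (a + of_nat k) (n - k)"
      using pochhammer_product'[of a k "n - k"] kn by simp
    have neg_n: "pochhammer (- real n) k = (-1) ^ k * fact n / fact (n - k)"
      using ffall_of_nat_mult_fact[OF kn] by (simp add: pochhammer_neg field_simps)
    show "hyp_coeff a (c - b) c k * (-1) ^ k * pochhammer (a + of_nat k) (n - k) / fact (n - k)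
        = pochhammer a n / fact n
            * (pochhammer (c - b) k * pochhammer (- of_nat n) k / (fact k * pochhammer c k))"
      using c[of k] unfolding hyp_coeff_def split_a neg_n
      by (simp add: field_simps power_mult_distrib[symmetric])
  qed
  also have "\<dots> = pochhammer a n / fact n * (pochhammer b n / pochhammer c n)"
    by (simp only: sum_distrib_left[symmetric] atLeast0AtMost[symmetric] Vandermonde)
  finally show ?thesis
    by (simp add: hyp_coeff_def field_simps)
qed

text \<open>Euler's transformation F(a,b;c;z) = (1-z)^(c-a-b) F(c-a,c-b;c;z), coefficientwise:
  expand (a+b-c)_(n-j), regroup along the diagonals and apply Pfaff's transformation twice.\<close>

lemma euler_coeff:
  assumes c: "\<And>k. pochhammer c k \<noteq> 0"
  shows "hyp_coeff a b c n
       = (\<Sum>j\<le>n. hyp_coeff (c - a) (c - b) c j * pochhammer (a + b - c) (n - j) / fact (n - j))"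
proof -
  define G where "G j i = hyp_coeff (c - a) (c - b) c j / fact (n - j)
     * (of_nat ((n - j) choose i) * ((-1) ^ i * pochhammer (c - b + of_nat j) i)
        * pochhammer (a + of_nat j + of_nat i) (n - j - i))" for j i
  have "(\<Sum>j\<le>n. hyp_coeff (c - a) (c - b) c j * pochhammer (a + b - c) (n - j) / fact (n - j))
      = (\<Sum>j\<le>n. \<Sum>i\<le>n - j. G j i)"
  proof (rule sum.cong[OF refl])
    fix j assume "j \<in> {..n}"
    have "pochhammer (a + b - c) (n - j) = pochhammer ((a + of_nat j) - (c - b + of_nat j)) (n - j)"
      by (simp add: algebra_simps)
    also have "\<dots> = (\<Sum>i\<le>n - j. of_nat ((n - j) choose i) * ((-1) ^ i * pochhammer (c - b + of_nat j) i)
                       * pochhammer (a + of_nat j + of_nat i) (n - j - i))"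
      by (rule pochhammer_diff_expansion)
    finally show "hyp_coeff (c - a) (c - b) c j * pochhammer (a + b - c) (n - j) / fact (n - j)
        = (\<Sum>i\<le>n - j. G j i)"
      by (simp add: G_def sum_distrib_left sum_divide_distrib)
  qed
  also have "\<dots> = (\<Sum>(j, i)\<in>{(j, i). j + i \<le> n}. G j i)"
  proof -
    have "Sigma {..n} (\<lambda>j. {..n - j}) = {(j, i). j + i \<le> n}" by auto
    then show ?thesis by (simp add: sum.Sigma)
  qed
  also have "\<dots> = (\<Sum>k\<le>n. \<Sum>j\<le>k. G j (k - j))"
    by (rule sum.triangle_reindex_eq)
  also have "\<dots> = (\<Sum>k\<le>n. (-1) ^ k * pochhammer (a + of_nat k) (n - k) / fact (n - k)
        * (\<Sum>j\<le>k. hyp_coeff (c - b) (c - a) c j * (-1) ^ j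
                     * pochhammer (c - b + of_nat j) (k - j) / fact (k - j)))"
  proof (rule sum.cong[OF refl])
    fix k assume "k \<in> {..n}"
    then have kn: "k \<le> n" by simp
    show "(\<Sum>j\<le>k. G j (k - j)) = (-1) ^ k * pochhammer (a + of_nat k) (n - k) / fact (n - k)
        * (\<Sum>j\<le>k. hyp_coeff (c - b) (c - a) c j * (-1) ^ j
                     * pochhammer (c - b + of_nat j) (k - j) / fact (k - j))"
      unfolding sum_distrib_left
    proof (rule sum.cong[OF refl])
      fix j assume "j \<in> {..k}"
      then have jk: "j \<le> k" by simp
      have binom: "real ((n - j) choose (k - j)) = fact (n - j) / (fact (k - j) * fact (n - k))"
        using binomial_fact[of "k - j" "n - j", where 'a=real] jk kn by simp
      have sign: "(-1::real) ^ (k - j) = (-1) ^ k * (-1) ^ j"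
      proof -
        obtain t where t: "k = j + t" using jk le_Suc_ex by blast
        have "(-1::real) ^ j * (-1) ^ j = 1" by (simp flip: power_mult_distrib)
        then show ?thesis unfolding t by (simp add: power_add algebra_simps)
      qed
      have idx: "a + real j + real (k - j) = a + real k" "n - j - (k - j) = n - k"
        using jk kn by simp_all
      show "G j (k - j) = (-1) ^ k * pochhammer (a + of_nat k) (n - k) / fact (n - k)
         * (hyp_coeff (c - b) (c - a) c j * (-1) ^ j * pochhammer (c - b + of_nat j) (k - j) / fact (k - j))"
        unfolding G_def binom sign idx by (simp add: hyp_coeff_commute field_simps)
    qed
  qed
  also have "\<dots> = (\<Sum>k\<le>n. (-1) ^ k * pochhammer (a + of_nat k) (n - k) / fact (n - k) * hyp_coeff (c - b) a c k)"
    using pfaff_coeff[OF c, of "c - b" a] by simp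
  also have "\<dots> = hyp_coeff a b c n"
    using pfaff_coeff[OF c, of a b] by (simp add: hyp_coeff_commute mult_ac)
  finally show ?thesis ..
qed

text \<open>The same statement for formal power series: F(a,b;c) = F(c-a,c-b;c) \<cdot> (1-z)^(-(a+b-c)),
  where (1-z)^(-x) = \<Sum>_k (x)_(k) z^k / k!.\<close>

definition hyp_fps :: "real \<Rightarrow> real \<Rightarrow> real \<Rightarrow> real fps" where
  "hyp_fps a b c = Abs_fps (hyp_coeff a b c)"

definition rising_fps :: "real \<Rightarrow> real fps" where
  "rising_fps x = Abs_fps (\<lambda>k. pochhammer x k / fact k)"

lemma euler_fps:
  assumes "\<And>k. pochhammer c k \<noteq> 0"
  shows "hyp_fps a b c = hyp_fps (c - a) (c - b) c * rising_fps (a + b - c)"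
proof (rule fps_ext)
  fix n
  show "hyp_fps a b c $ n = (hyp_fps (c - a) (c - b) c * rising_fps (a + b - c)) $ n"
    using euler_coeff[OF assms, of a b n]
    by (simp add: hyp_fps_def rising_fps_def fps_mult_nth atLeast0AtMost)
qed

text \<open>(1-z)^(-x) (1-z)^(-y) = (1-z)^(-(x+y)): the binomial theorem for rising factorials.\<close>

lemma rising_fps_add: "rising_fps x * rising_fps y = rising_fps (x + y)"
proof (rule fps_ext)
  fix n
  have "(rising_fps x * rising_fps y) $ n
      = (\<Sum>k\<le>n. of_nat (n choose k) * pochhammer x k * pochhammer y (n - k)) / fact n"
    unfolding rising_fps_def fps_mult_nth atLeast0AtMost sum_divide_distrib
    by (rule sum.cong[OF refl]) (simp add: binomial_fact field_simps)
  then show "(rising_fps x * rising_fps y) $ n = rising_fps (x + y) $ n"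
    by (simp add: rising_fps_def pochhammer_binomial_sum)
qed

lemma rising_fps_sum:
  fixes d :: nat
  shows "(\<Prod>i<d. rising_fps (x i)) = rising_fps (\<Sum>i<d. x i)"
proof (induction d)
  case 0
  show ?case
    by (rule fps_ext) (simp add: rising_fps_def pochhammer_0_left)
next
  case (Suc d)
  then show ?case by (simp add: rising_fps_add)
qed


section \<open>Sums over the simplex as power series coefficients\<close>

lemma simplex_pts_0: "simplex_pts 0 m = (if m = 0 then {\<lambda>_. 0} else {})"
  by (auto simp: simplex_pts_def)

lemma simplex_pts_Suc:
  "simplex_pts (Suc d) m = (\<lambda>(k, l). l(d := m - k)) ` Sigma {..m} (simplex_pts d)"
proof (rule set_eqI, rule iffI)
  fix l assume l: "l \<in> simplex_pts (Suc d) m"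
  define k where "k = (\<Sum>i<d. l i)"
  have km: "k \<le> m" and ld: "l d = m - k"
    using l by (auto simp: simplex_pts_def k_def)
  have "l(d := 0) \<in> simplex_pts d k"
    using l by (auto simp: simplex_pts_def k_def)
  moreover have "l = (l(d := 0))(d := m - k)"
    using ld by auto
  ultimately show "l \<in> (\<lambda>(k, l). l(d := m - k)) ` Sigma {..m} (simplex_pts d)"
    using km by (auto intro!: image_eqI[where x="(k, l(d := 0))"])
next
  fix l assume "l \<in> (\<lambda>(k, l). l(d := m - k)) ` Sigma {..m} (simplex_pts d)"
  then obtain k l' where kl: "k \<le> m" "l' \<in> simplex_pts d k" and l: "l = l'(d := m - k)"
    by auto
  have "(\<Sum>i<d. l i) = k"
    using kl unfolding l simplex_pts_def by auto
  then show "l \<in> simplex_pts (Suc d) m"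
    using kl unfolding simplex_pts_def l by auto
qed

lemma inj_on_simplex_extend: "inj_on (\<lambda>(k, l). l(d := m - k)) (Sigma {..m} (simplex_pts d))"
proof (rule inj_onI)
  fix x y
  assume x: "x \<in> Sigma {..m} (simplex_pts d)" and y: "y \<in> Sigma {..m} (simplex_pts d)"
    and e: "(\<lambda>(k, l). l(d := m - k)) x = (\<lambda>(k, l). l(d := m - k)) y"
  obtain k l k' l' where xy: "x = (k, l)" "y = (k', l')"
    by force
  have a: "k \<le> m" "l \<in> simplex_pts d k" "k' \<le> m" "l' \<in> simplex_pts d k'"
    using x y xy by auto
  have e': "l(d := m - k) = l'(d := m - k')"
    using e xy by simp
  then have "m - k = m - k'"
    by (metis fun_upd_same)
  with a have "k = k'"
    by auto
  moreover have "l d = 0" "l' d = 0"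
    using a by (auto simp: simplex_pts_def)
  then have "l = l'"
    using e' by (metis fun_upd_triv fun_upd_upd)
  ultimately show "x = y"
    using xy by simp
qed

lemma finite_simplex_pts: "finite (simplex_pts d m)"
  by (induction d arbitrary: m) (simp_all add: simplex_pts_0 simplex_pts_Suc)

lemma sum_simplex_prod_eq_fps_nth:
  fixes F :: "nat \<Rightarrow> nat \<Rightarrow> real"
  shows "(\<Sum>l\<in>simplex_pts d m. \<Prod>i<d. F i (l i)) = (\<Prod>i<d. Abs_fps (F i)) $ m"
proof (induction d arbitrary: m)
  case 0
  then show ?case by (simp add: simplex_pts_0)
next
  case (Suc d)
  have "(\<Sum>l\<in>simplex_pts (Suc d) m. \<Prod>i<Suc d. F i (l i))
      = (\<Sum>(k, l)\<in>Sigma {..m} (simplex_pts d). \<Prod>i<Suc d. F i ((l(d := m - k)) i))"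
    unfolding simplex_pts_Suc
    by (subst sum.reindex[OF inj_on_simplex_extend]) (simp add: case_prod_beta)
  also have "\<dots> = (\<Sum>(k, l)\<in>Sigma {..m} (simplex_pts d). (\<Prod>i<d. F i (l i)) * F d (m - k))"
    by (rule sum.cong[OF refl]) (auto intro!: prod.cong)
  also have "\<dots> = (\<Sum>k\<le>m. (\<Sum>l\<in>simplex_pts d k. \<Prod>i<d. F i (l i)) * F d (m - k))"
    by (simp add: sum.Sigma[symmetric] finite_simplex_pts sum_distrib_right)
  also have "\<dots> = ((\<Prod>i<d. Abs_fps (F i)) * Abs_fps (F d)) $ m"
    by (simp add: fps_mult_nth Suc.IH atLeast0AtMost)
  finally show ?case
    by simp
qed

definition prod_hyp_coeff ::
    "nat \<Rightarrow> (nat \<Rightarrow> real) \<Rightarrow> (nat \<Rightarrow> real) \<Rightarrow> (nat \<Rightarrow> real) \<Rightarrow> nat \<Rightarrow> real" where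
  "prod_hyp_coeff d a b c m = (\<Sum>l\<in>simplex_pts d m. \<Prod>i<d. hyp_coeff (a i) (b i) (c i) (l i))"

lemma prod_hyp_coeff_eq_fps_nth:
  "prod_hyp_coeff d a b c m = (\<Prod>i<d. hyp_fps (a i) (b i) (c i)) $ m"
  unfolding prod_hyp_coeff_def hyp_fps_def
  by (rule sum_simplex_prod_eq_fps_nth)

lemma prod_hyp_coeff_euler:
  assumes c: "\<And>i k. i < d \<Longrightarrow> pochhammer (c i) k \<noteq> 0"
  shows "prod_hyp_coeff d a b c m
       = (\<Sum>k\<le>m. prod_hyp_coeff d (\<lambda>i. c i - a i) (\<lambda>i. c i - b i) c k
                   * (pochhammer (\<Sum>i<d. a i + b i - c i) (m - k) / fact (m - k)))"
proof -
  have "(\<Prod>i<d. hyp_fps (a i) (b i) (c i))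
      = (\<Prod>i<d. hyp_fps (c i - a i) (c i - b i) (c i) * rising_fps (a i + b i - c i))"
    using c by (intro prod.cong[OF refl] euler_fps) auto
  also have "\<dots> = (\<Prod>i<d. hyp_fps (c i - a i) (c i - b i) (c i)) * rising_fps (\<Sum>i<d. a i + b i - c i)"
    by (simp add: prod.distrib rising_fps_sum)
  finally show ?thesis
    by (simp add: prod_hyp_coeff_eq_fps_nth fps_mult_nth atLeast0AtMost rising_fps_def)
qed

section \<open>Expansion of \<xi> in terms of \<chi>\<close>

text \<open>A product of hypergeometric coefficients, split into its four products; this is the
  shape in which Dirichlet-multinomial weights appear.\<close>

lemma prod_hyp_coeff_eq:
  "(\<Prod>i<d. hyp_coeff (a i) (b i) (c i) (l i))
     = (\<Prod>i<d. pochhammer (a i) (l i)) * (\<Prod>i<d. pochhammer (b i) (l i))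
       / ((\<Prod>i<d. pochhammer (c i) (l i)) * (\<Prod>i<d. fact (l i)))"
  by (simp add: hyp_coeff_def prod_dividef prod.distrib)

definition xi_chi_coeff :: "nat \<Rightarrow> real \<Rightarrow> nat \<Rightarrow> nat \<Rightarrow> real" where
  "xi_chi_coeff N \<theta> m k = fact m * pochhammer \<theta> m / pochhammer (\<theta> + real N) m ^ 2
     * (ffall (real N) k ^ 2 / (fact k * pochhammer \<theta> k))
     * (pochhammer (\<theta> + real N + real N) (m - k) / fact (m - k))"

context
  fixes d N :: nat and \<alpha> :: "nat \<Rightarrow> real" and r s :: "nat \<Rightarrow> nat"
  assumes \<alpha>_pos: "\<forall>i<d. 0 < \<alpha> i" and d_pos: "0 < d"
    and r_simplex: "r \<in> simplex_pts d N" and s_simplex: "s \<in> simplex_pts d N"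
begin

lemma sum_\<alpha>_pos: "0 < (\<Sum>i<d. \<alpha> i)"
  using \<alpha>_pos d_pos by (intro sum_pos) auto

lemma sum_r: "(\<Sum>i<d. real (r i)) = real N" and sum_s: "(\<Sum>i<d. real (s i)) = real N"
  using r_simplex s_simplex by (simp_all add: simplex_pts_def flip: of_nat_sum)

lemma prod_pochhammer_\<alpha>_neq_0: "(\<Prod>i<d. pochhammer (\<alpha> i) (l i)) \<noteq> 0"
  using \<alpha>_pos by (simp add: pochhammer_pos_neq_0)

lemma xiH_eq_prod_hyp_coeff:
  "xiH d \<alpha> m r s = fact m * pochhammer (\<Sum>i<d. \<alpha> i) m / pochhammer ((\<Sum>i<d. \<alpha> i) + real N) m ^ 2
     * prod_hyp_coeff d (\<lambda>i. \<alpha> i + real (r i)) (\<lambda>i. \<alpha> i + real (s i)) \<alpha> m"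
proof -
  have ratio: "(F / PF * PR / P1) * (F / PF * PS / P1) / (F / PF * PA / P0)
      = F * P0 / P1 ^ 2 * (PR * PS / (PA * PF))"
    if "F \<noteq> 0" "PF \<noteq> 0" "P0 \<noteq> 0" "P1 \<noteq> 0" "PA \<noteq> 0" for F PF PR PS PA P0 P1 :: real
    using that by (simp add: field_simps power2_eq_square)
  have sums: "(\<Sum>i<d. \<alpha> i + real (r i)) = (\<Sum>i<d. \<alpha> i) + real N"
             "(\<Sum>i<d. \<alpha> i + real (s i)) = (\<Sum>i<d. \<alpha> i) + real N"
    using sum_r sum_s by (simp_all add: sum.distrib)
  show ?thesis
    unfolding xiH_def prod_hyp_coeff_def sum_distrib_left
  proof (rule sum.cong[OF refl])
    fix l
    show "DM d (\<lambda>i. \<alpha> i + real (r i)) l m * DM d (\<lambda>i. \<alpha> i + real (s i)) l m / DM d \<alpha> l m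
        = fact m * pochhammer (\<Sum>i<d. \<alpha> i) m / pochhammer ((\<Sum>i<d. \<alpha> i) + real N) m ^ 2
          * (\<Prod>i<d. hyp_coeff (\<alpha> i + real (r i)) (\<alpha> i + real (s i)) (\<alpha> i) (l i))"
      unfolding DM_def multinom_def sums prod_hyp_coeff_eq
      using sum_\<alpha>_pos prod_pochhammer_\<alpha>_neq_0
      by (intro ratio) (simp_all add: pochhammer_pos_neq_0)
  qed
qed

lemma prod_hyp_coeff_eq_chiH:
  assumes "k \<le> N"
  shows "prod_hyp_coeff d (\<lambda>i. - real (r i)) (\<lambda>i. - real (s i)) \<alpha> k
       = ffall (real N) k ^ 2 / (fact k * pochhammer (\<Sum>i<d. \<alpha> i) k) * chiH d N \<alpha> k r s"
proof -
  have ratio: "PR * PS / (PA * PF) = FF ^ 2 / (F * P0)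
        * (1 / (F / PF * PA / P0) * (F / PF * PR / FF) * (F / PF * PS / FF))"
    if "F \<noteq> 0" "PF \<noteq> 0" "P0 \<noteq> 0" "FF \<noteq> 0" "PA \<noteq> 0" for F PF PR PS PA P0 FF :: real
    using that by (simp add: field_simps power2_eq_square)
  have pl_mult: "pl d l r * pl d l s
      = (\<Prod>i<d. pochhammer (- real (r i)) (l i)) * (\<Prod>i<d. pochhammer (- real (s i)) (l i))" for l
    by (simp add: pl_def prod.distrib[symmetric] pochhammer_neg_mult_neg)
  show ?thesis
    unfolding chiH_def prod_hyp_coeff_def sum_distrib_left
  proof (rule sum.cong[OF refl])
    fix l
    have hyp: "(\<Prod>i<d. hyp_coeff (- real (r i)) (- real (s i)) (\<alpha> i) (l i))
        = pl d l r * pl d l s / ((\<Prod>i<d. pochhammer (\<alpha> i) (l i)) * (\<Prod>i<d. fact (l i)))"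
      by (simp only: prod_hyp_coeff_eq pl_mult)
    show "(\<Prod>i<d. hyp_coeff (- real (r i)) (- real (s i)) (\<alpha> i) (l i))
        = ffall (real N) k ^ 2 / (fact k * pochhammer (\<Sum>i<d. \<alpha> i) k)
          * (1 / DM d \<alpha> l k * (multinom d k l * pl d l r / ffall (real N) k)
               * (multinom d k l * pl d l s / ffall (real N) k))"
      unfolding hyp DM_def multinom_def
      using sum_\<alpha>_pos prod_pochhammer_\<alpha>_neq_0 ffall_of_nat_neq_0[OF assms]
      by (intro ratio) (simp_all add: pochhammer_pos_neq_0)
  qed
qed

text \<open>Euler's transformation in every coordinate turns the first product into the second one
  times (1-z)^(-(\<theta>+2N)); this gives \<xi>_m = \<Sum>_{k \<le> m} c_mk \<chi>_k.\<close>

lemma xiH_eq_sum_chiH: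
  assumes "m \<le> N"
  shows "xiH d \<alpha> m r s = (\<Sum>k\<le>m. xi_chi_coeff N (\<Sum>i<d. \<alpha> i) m k * chiH d N \<alpha> k r s)"
proof -
  define \<theta> where "\<theta> = (\<Sum>i<d. \<alpha> i)"
  have weight: "(\<Sum>i<d. \<alpha> i + real (r i) + (\<alpha> i + real (s i)) - \<alpha> i) = \<theta> + real N + real N"
    using sum_r sum_s by (simp add: \<theta>_def sum.distrib)
  have euler: "prod_hyp_coeff d (\<lambda>i. \<alpha> i + real (r i)) (\<lambda>i. \<alpha> i + real (s i)) \<alpha> m
      = (\<Sum>k\<le>m. prod_hyp_coeff d (\<lambda>i. - real (r i)) (\<lambda>i. - real (s i)) \<alpha> k
                  * (pochhammer (\<theta> + real N + real N) (m - k) / fact (m - k)))"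
    using prod_hyp_coeff_euler[of d \<alpha> "\<lambda>i. \<alpha> i + real (r i)" "\<lambda>i. \<alpha> i + real (s i)" m,
        unfolded weight] \<alpha>_pos
    by (simp add: pochhammer_pos_neq_0)
  have "xiH d \<alpha> m r s = fact m * pochhammer \<theta> m / pochhammer (\<theta> + real N) m ^ 2
      * (\<Sum>k\<le>m. ffall (real N) k ^ 2 / (fact k * pochhammer \<theta> k) * chiH d N \<alpha> k r s
                  * (pochhammer (\<theta> + real N + real N) (m - k) / fact (m - k)))"
    using assms by (simp add: xiH_eq_prod_hyp_coeff euler prod_hyp_coeff_eq_chiH \<theta>_def)
  also have "\<dots> = (\<Sum>k\<le>m. xi_chi_coeff N \<theta> m k * chiH d N \<alpha> k r s)"
    by (simp add: sum_distrib_left xi_chi_coeff_def mult_ac)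
  finally show ?thesis
    by (simp add: \<theta>_def)
qed

end


section \<open>Inverting the coefficients a_nl\<close>

definition fall_rise :: "real \<Rightarrow> nat \<Rightarrow> nat \<Rightarrow> real" where
  "fall_rise \<theta> k n = ffall (real k) n / pochhammer (\<theta> + real k) n"

lemma bcoef_eq_fall_rise:
  "bcoef N \<theta> m l = (\<Sum>n=l..m. fall_rise \<theta> N n ^ 2 * fall_rise \<theta> m n * acoef \<theta> n l)"
  by (simp add: bcoef_def fall_rise_def)

text \<open>The diagonal entries a_ll = (\<theta>+l)_(l) / l!; they start the telescoping sum below.\<close>

lemma acoef_diag: "acoef \<theta> l l = pochhammer (\<theta> + real l) l / fact l"
proof (cases l)
  case 0
  then show ?thesis by (simp add: acoef_def)
next
  case (Suc l')
  then show ?thesis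
    by (simp add: acoef_def pochhammer_Suc algebra_simps)
qed

text \<open>The partial sums of \<Sum>_n \<rho>_k(n) a_nl telescope to an explicit product.\<close>

lemma fall_rise_acoef_partial_sum:
  assumes \<theta>: "0 < \<theta>"
  shows "(real k - real l) * (\<Sum>n=l..l+t. fall_rise \<theta> k n * acoef \<theta> n l)
     = (-1) ^ t * ffall (real k) (l + t + 1) * pochhammer (\<theta> + real l) (l + t)
        / (pochhammer (\<theta> + real k) (l + t) * fact l * fact t)"
proof (induction t)
  case 0
  show ?case
    by (simp add: fall_rise_def acoef_diag ffall_Suc mult_ac)
next
  case (Suc t)
  define j where "j = l + t"
  define X where "X = ffall (real k) (Suc j)"
  define Y where "Y = pochhammer (\<theta> + real l) j"
  define Z where "Z = pochhammer (\<theta> + real k) j"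
  define A where "A = \<theta> + real k + real j"
  define u where "u = real t + 1"
  define C where "C = (-1) ^ t * X * Y / (Z * A * fact l * (u * fact t))"
  \<comment> \<open>After factoring out C the induction step is the polynomial identity \<open>key\<close>.\<close>
  have nz: "Z \<noteq> 0" "A \<noteq> 0" "u \<noteq> 0" "(fact l :: real) \<noteq> 0" "(fact t :: real) \<noteq> 0"
    using \<theta> by (simp_all add: Z_def A_def u_def pochhammer_pos_neq_0)
  have partial_t: "(real k - real l) * (\<Sum>n=l..l+t. fall_rise \<theta> k n * acoef \<theta> n l) = C * (A * u)"
    unfolding Suc.IH C_def using nz by (simp add: X_def Y_def Z_def j_def field_simps)
  have next_term: "(real k - real l) * (fall_rise \<theta> k (Suc j) * acoef \<theta> (Suc j) l)
      = C * (- (real k - real l) * (\<theta> + 2 * real j + 1))"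
  proof -
    have "Suc j - l = Suc t" "Suc j - 1 = j" by (simp_all add: j_def)
    then show ?thesis
      unfolding C_def using nz
      by (simp add: fall_rise_def acoef_def X_def Y_def Z_def A_def u_def pochhammer_Suc field_simps)
  qed
  have key: "A * u + - (real k - real l) * (\<theta> + 2 * real j + 1)
      = - ((real k - real j - 1) * (\<theta> + real l + real j))"
    by (simp add: A_def u_def j_def algebra_simps)
  have "(\<Sum>n=l..l+Suc t. fall_rise \<theta> k n * acoef \<theta> n l)
      = (\<Sum>n=l..l+t. fall_rise \<theta> k n * acoef \<theta> n l) + fall_rise \<theta> k (Suc j) * acoef \<theta> (Suc j) l"
    by (simp add: j_def)
  then have "(real k - real l) * (\<Sum>n=l..l+Suc t. fall_rise \<theta> k n * acoef \<theta> n l)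
      = C * (A * u) + C * (- (real k - real l) * (\<theta> + 2 * real j + 1))"
    by (simp only: distrib_left partial_t next_term)
  also have "\<dots> = C * (- ((real k - real j - 1) * (\<theta> + real l + real j)))"
    by (simp only: key flip: distrib_left)
  also have "\<dots> = (-1) ^ Suc t * ffall (real k) (l + Suc t + 1) * pochhammer (\<theta> + real l) (l + Suc t)
        / (pochhammer (\<theta> + real k) (l + Suc t) * fact l * fact (Suc t))"
    unfolding C_def using nz
    by (simp add: X_def Y_def Z_def A_def u_def j_def ffall_Suc pochhammer_Suc field_simps)
  finally show ?case .
qed

lemma fall_rise_acoef_inverse:
  assumes \<theta>: "0 < \<theta>" and "l \<le> k"
  shows "(\<Sum>n=l..k. fall_rise \<theta> k n * acoef \<theta> n l) = (if k = l then 1 else 0)"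
proof (cases "k = l")
  case True
  have "ffall (real l) l = fact l"
    using ffall_of_nat_mult_fact[of l l] by simp
  with True \<theta> show ?thesis
    by (simp add: fall_rise_def acoef_diag pochhammer_pos_neq_0)
next
  case False
  with assms obtain t where t: "k = l + t" and "l < k"
    using le_Suc_ex by force
  have "ffall (real k) (l + t + 1) = 0"
    by (rule ffall_of_nat_eq_0) (simp add: t)
  then have "(real k - real l) * (\<Sum>n=l..k. fall_rise \<theta> k n * acoef \<theta> n l) = 0"
    using fall_rise_acoef_partial_sum[OF \<theta>, of k l t] by (simp add: t)
  with \<open>l < k\<close> False show ?thesis
    by simp
qed


section \<open>The coefficients b_ml\<close>

text \<open>A single term of \<Sum>_k c_mk \<rho>_k(n), written with k = n + i as a term of Euler's
  transformation with parameters a = b = \<theta>+N+n and c = \<theta>+2n.\<close>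

lemma xi_chi_coeff_mult_fall_rise:
  assumes \<theta>: "0 < \<theta>"
  shows "xi_chi_coeff N \<theta> m (n + i) * fall_rise \<theta> (n + i) n
    = fact m * pochhammer \<theta> m * ffall (real N) n ^ 2 / (pochhammer (\<theta> + real N) m ^ 2 * pochhammer \<theta> (2 * n))
      * hyp_coeff (- (real N - real n)) (- (real N - real n)) (\<theta> + 2 * real n) i
      * (pochhammer (\<theta> + real N + real N) (m - n - i) / fact (m - n - i))"
proof -
  have split_N: "ffall (real N) (n + i) ^ 2
      = ffall (real N) n ^ 2 * (pochhammer (- (real N - real n)) i * pochhammer (- (real N - real n)) i)"
    by (simp only: ffall_add pochhammer_neg_mult_neg power_mult_distrib power2_eq_square mult_ac)
  have fact_ni: "fact (n + i) = ffall (real (n + i)) n * fact i"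
    using ffall_of_nat_mult_fact[of n "n + i"] by simp
  have poch_\<theta>: "pochhammer \<theta> (n + i) * pochhammer (\<theta> + real (n + i)) n
      = pochhammer \<theta> (2 * n) * pochhammer (\<theta> + 2 * real n) i"
  proof -
    have "pochhammer \<theta> (n + i) * pochhammer (\<theta> + real (n + i)) n = pochhammer \<theta> (2 * n + i)"
      by (simp add: pochhammer_product' add_ac mult_2)
    also have "\<dots> = pochhammer \<theta> (2 * n) * pochhammer (\<theta> + 2 * real n) i"
      by (simp add: pochhammer_product')
    finally show ?thesis .
  qed
  have algebra: "F * P / Q ^ 2 * (G * H / (R * T * S1)) * W * (R / S2)
      = F * P * G / (Q ^ 2 * S3) * (H / (S4 * T)) * W"
    if "S1 * S2 = S3 * S4" "R \<noteq> 0" "T \<noteq> 0" "S1 \<noteq> 0" "S2 \<noteq> 0" "S3 \<noteq> 0" "S4 \<noteq> 0" "Q \<noteq> 0"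
    for F P Q G H R T S1 S2 S3 S4 W :: real
  proof -
    have "F * P / Q ^ 2 * (G * H / (R * T * S1)) * W * (R / S2) = F * P * G * H * W / (Q ^ 2 * T * (S1 * S2))"
      using that by (simp add: field_simps)
    also have "\<dots> = F * P * G / (Q ^ 2 * S3) * (H / (S4 * T)) * W"
      using that by (simp add: field_simps)
    finally show ?thesis .
  qed
  show ?thesis
    unfolding xi_chi_coeff_def fall_rise_def hyp_coeff_def split_N fact_ni diff_diff_left
    using \<theta> ffall_of_nat_neq_0[of n "n + i"]
    by (intro algebra[OF poch_\<theta>]) (simp_all add: pochhammer_pos_neq_0)
qed

text \<open>The value of the Euler sum met below, in closed form: with a = \<theta>+N+n, c = \<theta>+2n and
  M = m-n, the factors (\<theta>+N)_(m), (\<theta>)_(2n) (c)_(M) and m! recombine into \<rho>_N(n)^2 \<rho>_m(n).\<close>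

lemma euler_sum_closed_form:
  assumes \<theta>: "0 < \<theta>" and nm: "n \<le> m"
  shows "fact m * pochhammer \<theta> m * ffall (real N) n ^ 2
           / (pochhammer (\<theta> + real N) m ^ 2 * pochhammer \<theta> (2 * n))
         * hyp_coeff (\<theta> + real N + real n) (\<theta> + real N + real n) (\<theta> + 2 * real n) (m - n)
       = fall_rise \<theta> N n ^ 2 * fall_rise \<theta> m n"
proof -
  define M where "M = m - n"
  define a where "a = \<theta> + real N + real n"
  define c where "c = \<theta> + 2 * real n"
  have split_N: "pochhammer (\<theta> + real N) m = pochhammer (\<theta> + real N) n * pochhammer a M"
    using pochhammer_product'[of "\<theta> + real N" n M] nm by (simp add: M_def a_def add_ac)
  have split_\<theta>: "pochhammer \<theta> (2 * n) * pochhammer c M = pochhammer \<theta> m * pochhammer (\<theta> + real m) n"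
  proof -
    have "pochhammer \<theta> (2 * n) * pochhammer c M = pochhammer \<theta> (2 * n + M)"
      by (simp add: pochhammer_product' c_def)
    also have "2 * n + M = m + n"
      using nm by (simp add: M_def)
    also have "pochhammer \<theta> (m + n) = pochhammer \<theta> m * pochhammer (\<theta> + real m) n"
      by (simp add: pochhammer_product')
    finally show ?thesis .
  qed
  have fact_m: "fact m = ffall (real m) n * fact M"
    using ffall_of_nat_mult_fact[OF nm] by (simp add: M_def)
  have algebra: "F * P * G ^ 2 / ((Q1 * QA) ^ 2 * S1) * (QA * QA / (S2 * FM)) = (G / Q1) ^ 2 * (R / S3)"
    if "S1 * S2 = P * S3" "F = R * FM" "Q1 \<noteq> 0" "QA \<noteq> 0" "S1 \<noteq> 0" "S2 \<noteq> 0"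
      "FM \<noteq> 0" "P \<noteq> 0" "S3 \<noteq> 0"
    for F P G Q1 QA S1 S2 FM R S3 :: real
  proof -
    have "F * P * G ^ 2 / ((Q1 * QA) ^ 2 * S1) * (QA * QA / (S2 * FM)) = R * P * G ^ 2 / (Q1 ^ 2 * (S1 * S2))"
      using that by (simp add: field_simps power2_eq_square)
    also have "\<dots> = (G / Q1) ^ 2 * (R / S3)"
      using that by (simp add: field_simps power2_eq_square)
    finally show ?thesis .
  qed
  show ?thesis
    unfolding a_def[symmetric] c_def[symmetric] M_def[symmetric] hyp_coeff_def fall_rise_def split_N
    using \<theta> by (intro algebra[OF split_\<theta> fact_m])
      (simp_all add: a_def c_def pochhammer_pos_neq_0)
qed

text \<open>Summing over k by Euler's transformation: \<Sum>_k c_mk \<rho>_k(n) = \<rho>_N(n)^2 \<rho>_m(n).\<close>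

lemma sum_xi_chi_coeff_fall_rise:
  assumes \<theta>: "0 < \<theta>" and nm: "n \<le> m"
  shows "(\<Sum>k=n..m. xi_chi_coeff N \<theta> m k * fall_rise \<theta> k n) = fall_rise \<theta> N n ^ 2 * fall_rise \<theta> m n"
proof -
  define M where "M = m - n"
  define K where "K = fact m * pochhammer \<theta> m * ffall (real N) n ^ 2
                       / (pochhammer (\<theta> + real N) m ^ 2 * pochhammer \<theta> (2 * n))"
  define a where "a = \<theta> + real N + real n"
  define c where "c = \<theta> + 2 * real n"
  have c: "\<And>k. pochhammer c k \<noteq> 0"
    using \<theta> by (simp add: c_def pochhammer_pos_neq_0)
  have "(\<Sum>k=n..m. xi_chi_coeff N \<theta> m k * fall_rise \<theta> k n)
      = (\<Sum>i\<le>M. xi_chi_coeff N \<theta> m (n + i) * fall_rise \<theta> (n + i) n)"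
    using sum.shift_bounds_cl_nat_ivl[of "\<lambda>k. xi_chi_coeff N \<theta> m k * fall_rise \<theta> k n" 0 n M] nm
    by (simp add: M_def atLeast0AtMost add.commute)
  also have "\<dots> = K * (\<Sum>i\<le>M. hyp_coeff (c - a) (c - a) c i * pochhammer (a + a - c) (M - i) / fact (M - i))"
    unfolding sum_distrib_left
  proof (rule sum.cong[OF refl])
    fix i assume "i \<in> {..M}"
    then have Mi: "M - i = m - n - i"
      by (simp add: M_def)
    have ca: "c - a = - (real N - real n)" and aac: "a + a - c = \<theta> + real N + real N"
      by (simp_all add: a_def c_def)
    show "xi_chi_coeff N \<theta> m (n + i) * fall_rise \<theta> (n + i) n
        = K * (hyp_coeff (c - a) (c - a) c i * pochhammer (a + a - c) (M - i) / fact (M - i))"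
      unfolding ca aac Mi
      unfolding xi_chi_coeff_mult_fall_rise[OF \<theta>] K_def c_def
      by (simp only: mult.assoc times_divide_eq_right)
  qed
  also have "\<dots> = K * hyp_coeff a a c M"
    using euler_coeff[OF c, of a a M] by simp
  also have "\<dots> = fall_rise \<theta> N n ^ 2 * fall_rise \<theta> m n"
    unfolding K_def a_def c_def M_def by (rule euler_sum_closed_form[OF \<theta> nm])
  finally show ?thesis .
qed

lemma sum_triangle_swap:
  fixes f :: "nat \<Rightarrow> nat \<Rightarrow> 'a::comm_monoid_add"
  shows "(\<Sum>n=l..m. \<Sum>k=n..m. f n k) = (\<Sum>k=l..m. \<Sum>n=l..k. f n k)"
proof -
  have "(\<Sum>n=l..m. \<Sum>k=n..m. f n k) = (\<Sum>(n, k)\<in>Sigma {l..m} (\<lambda>n. {n..m}). f n k)"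
    by (simp add: sum.Sigma)
  also have "\<dots> = (\<Sum>(k, n)\<in>Sigma {l..m} (\<lambda>k. {l..k}). f n k)"
    by (rule sum.reindex_bij_witness[of _ "\<lambda>(k, n). (n, k)" "\<lambda>(n, k). (k, n)"]) auto
  also have "\<dots> = (\<Sum>k=l..m. \<Sum>n=l..k. f n k)"
    by (simp add: sum.Sigma)
  finally show ?thesis .
qed

text \<open>Inverting with the a-coefficients: b_ml = c_ml.\<close>

lemma bcoef_eq_xi_chi_coeff:
  assumes \<theta>: "0 < \<theta>" and "l \<le> m"
  shows "bcoef N \<theta> m l = xi_chi_coeff N \<theta> m l"
proof -
  have "bcoef N \<theta> m l = (\<Sum>n=l..m. \<Sum>k=n..m. xi_chi_coeff N \<theta> m k * fall_rise \<theta> k n * acoef \<theta> n l)"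
    unfolding bcoef_eq_fall_rise
  proof (rule sum.cong[OF refl])
    fix n assume "n \<in> {l..m}"
    then have "n \<le> m" by simp
    have "(\<Sum>k=n..m. xi_chi_coeff N \<theta> m k * fall_rise \<theta> k n * acoef \<theta> n l)
        = (\<Sum>k=n..m. xi_chi_coeff N \<theta> m k * fall_rise \<theta> k n) * acoef \<theta> n l"
      by (simp add: sum_distrib_right)
    then show "fall_rise \<theta> N n ^ 2 * fall_rise \<theta> m n * acoef \<theta> n l
        = (\<Sum>k=n..m. xi_chi_coeff N \<theta> m k * fall_rise \<theta> k n * acoef \<theta> n l)"
      by (simp add: sum_xi_chi_coeff_fall_rise[OF \<theta> \<open>n \<le> m\<close>])
  qed
  also have "\<dots> = (\<Sum>k=l..m. xi_chi_coeff N \<theta> m k * (\<Sum>n=l..k. fall_rise \<theta> k n * acoef \<theta> n l))"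
    by (simp add: sum_triangle_swap sum_distrib_left mult.assoc)
  also have "\<dots> = (\<Sum>k=l..m. if k = l then xi_chi_coeff N \<theta> m k else 0)"
    by (intro sum.cong[OF refl]) (simp add: fall_rise_acoef_inverse[OF \<theta>])
  also have "\<dots> = xi_chi_coeff N \<theta> m l"
    using assms by simp
  finally show ?thesis .
qed


theorem corollary3p5:
  fixes d N m :: nat and \<alpha> :: "nat \<Rightarrow> real" and r s :: "nat \<Rightarrow> nat"
  assumes "d \<ge> 2"
    and "\<forall>i<d. \<alpha> i > 0"
    and "m \<le> N"
    and "r \<in> simplex_pts d N" and "s \<in> simplex_pts d N"
  shows "xiH d \<alpha> m r s
       = (\<Sum>l=0..m. bcoef N (\<Sum>i<d. \<alpha> i) m l * chiH d N \<alpha> l r s)"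
proof -
  have d: "0 < d"
    using assms(1) by simp
  note xi_setting = assms(2) d assms(4,5)
  have \<theta>: "0 < (\<Sum>i<d. \<alpha> i)"
    using sum_\<alpha>_pos[OF xi_setting] .
  have "xiH d \<alpha> m r s = (\<Sum>l\<le>m. xi_chi_coeff N (\<Sum>i<d. \<alpha> i) m l * chiH d N \<alpha> l r s)"
    using xiH_eq_sum_chiH[OF xi_setting assms(3)] .
  also have "\<dots> = (\<Sum>l=0..m. bcoef N (\<Sum>i<d. \<alpha> i) m l * chiH d N \<alpha> l r s)"
    by (simp add: atLeast0AtMost bcoef_eq_xi_chi_coeff[OF \<theta>])
  finally show ?thesis .
qed

end
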